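(* Let $B\subseteq C(n,p)$ be finite and $e\ge1$. Then $(I_B)^{[p^e]}=I_{B^{[p^e]}}$, where $B^{[p^e]}=\bigsqcup_{d\ge0}\{c^{p^e}: c\in B_d\}$ and, for $c=(c_1,\dots,c_M)\in C(d,n,p)$, $c^{p^e}=(0,\dots,0,c_1,\dots,c_M)$ ($e$ zeros) $\in C(dp^e,n,p)$. In particular $(I_{c,d})^{[p^e]}=I_{c^{p^e},dp^e}$.
   Context: $\mathbf k$ is algebraically closed of characteristic $p>0$, $S=\mathbf k[x_1,\dots,x_n]$. For an ideal $I=\langle f_1,\dots,f_r\rangle$, its Frobenius power is $I^{[p^e]}=\langle f_1^{p^e},\dots,f_r^{p^e}\rangle$. Base-$p$ expansion: $a=\sum_ja_jp^j$ with $0\le a_j\le p-1$; for $d\ge1$, $M=\max\{j:d_j\ne0\}$. The carry pattern of a degree-$d$ monomial $x_1^{b_1}\cdots x_n^{b_n}$ (with $b_{i,j}$ the base-$p$ digits of $b_i$) is $(c_1,\dots,c_M)$ defined by $\sum_{i}\sum_{j<\ell}b_{i,j}p^j=c_\ell p^\ell+\sum_{j<\ell}d_jp^j$, $1\le\ell\le M$. $C(d,n,p)$ is the set of such carry patterns, ordered componentwise, $C(n,p)=\bigsqcup_dC(d,n,p)$, $B_d=B\cap C(d,n,p)$. $I_{c,d}$ is the ideal generated by the degree-$d$ monomials with carry pattern $\le c$, and $I_B=\sum_d\sum_{c\in B_d}I_{c,d}$. *)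

theory Defs
  imports "HOL-Library.Poly_Mapping" "HOL-Computational_Algebra.Polynomial"
begin

text \<open>Polynomials over 'k in the variables x_0, x_1, ...: an exponent vector is a
  finitely supported function nat =>0 nat, a polynomial a finitely supported map
  from exponent vectors to coefficients (convolution product).  The ring
  S = k[x_1,...,x_n] is the set of polynomials involving only the variables with index < n.\<close>

type_synonym 'k mpoly = "(nat \<Rightarrow>\<^sub>0 nat) \<Rightarrow>\<^sub>0 'k"

definition polyring :: "nat \<Rightarrow> 'k::comm_ring_1 mpoly set" where
  "polyring n = {f. \<forall>b \<in> Poly_Mapping.keys f. Poly_Mapping.keys b \<subseteq> {..<n}}"

definition monom :: "(nat \<Rightarrow>\<^sub>0 nat) \<Rightarrow> 'k::comm_ring_1 mpoly" where
  "monom b = Poly_Mapping.single b 1"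

definition ideal_gen :: "nat \<Rightarrow> 'k::comm_ring_1 mpoly set \<Rightarrow> 'k mpoly set" where
  "ideal_gen n G = {f. \<exists>F h. finite F \<and> F \<subseteq> G \<and> (\<forall>g\<in>F. h g \<in> polyring n)
                          \<and> f = (\<Sum>g\<in>F. h g * g)}"

text \<open>Frobenius power: generated by the q-th powers of (generators of) I;
  we take all elements of I as generators (independent of the generating set).\<close>
definition frob_power :: "nat \<Rightarrow> 'k::comm_ring_1 mpoly set \<Rightarrow> nat \<Rightarrow> 'k mpoly set" where
  "frob_power n I q = ideal_gen n {f ^ q | f. f \<in> I}"

definition digit :: "nat \<Rightarrow> nat \<Rightarrow> nat \<Rightarrow> nat" where
  "digit p a j = a div p ^ j mod p"

definition topdig :: "nat \<Rightarrow> nat \<Rightarrow> nat" where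
  "topdig p d = (if d = 0 then 0 else Max {j. digit p d j \<noteq> 0})"

definition deg_monos :: "nat \<Rightarrow> nat \<Rightarrow> (nat \<Rightarrow>\<^sub>0 nat) set" where
  "deg_monos d n = {b. Poly_Mapping.keys b \<subseteq> {..<n} \<and> (\<Sum>i<n. Poly_Mapping.lookup b i) = d}"

text \<open>Carry pattern (c_1,...,c_M) of a degree-d monomial b, encoded as a function
  nat => nat which is c_l for 1 \<le> l \<le> M and 0 elsewhere.  c_l is determined by
  sum_i sum_{j<l} b_{i,j} p^j = c_l p^l + sum_{j<l} d_j p^j.\<close>
definition carry :: "nat \<Rightarrow> nat \<Rightarrow> nat \<Rightarrow> (nat \<Rightarrow>\<^sub>0 nat) \<Rightarrow> nat \<Rightarrow> nat" where
  "carry p n d b l =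
     (if 1 \<le> l \<and> l \<le> topdig p d then
        ((\<Sum>i<n. \<Sum>j<l. digit p (Poly_Mapping.lookup b i) j * p ^ j) - (\<Sum>j<l. digit p d j * p ^ j)) div p ^ l
      else 0)"

definition carry_set :: "nat \<Rightarrow> nat \<Rightarrow> nat \<Rightarrow> (nat \<Rightarrow> nat) set" where
  "carry_set d n p = carry p n d ` deg_monos d n"

text \<open>C(n,p) as a disjoint union: pairs (d, c) with c \<in> C(d,n,p).\<close>
definition carry_all :: "nat \<Rightarrow> nat \<Rightarrow> (nat \<times> (nat \<Rightarrow> nat)) set" where
  "carry_all n p = {(d, c). c \<in> carry_set d n p}"

definition carry_le :: "nat \<Rightarrow> nat \<Rightarrow> (nat \<Rightarrow> nat) \<Rightarrow> (nat \<Rightarrow> nat) \<Rightarrow> bool" where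
  "carry_le p d c c' = (\<forall>l. 1 \<le> l \<and> l \<le> topdig p d \<longrightarrow> c l \<le> c' l)"

definition I_cd :: "nat \<Rightarrow> nat \<Rightarrow> (nat \<Rightarrow> nat) \<Rightarrow> nat \<Rightarrow> 'k::comm_ring_1 mpoly set" where
  "I_cd n p c d = ideal_gen n (monom ` {b \<in> deg_monos d n. carry_le p d (carry p n d b) c})"

text \<open>I_B = sum over (d,c) \<in> B of I_{c,d} (sum of ideals = ideal generated by the union).\<close>
definition I_B :: "nat \<Rightarrow> nat \<Rightarrow> (nat \<times> (nat \<Rightarrow> nat)) set \<Rightarrow> 'k::comm_ring_1 mpoly set" where
  "I_B n p B = ideal_gen n (\<Union>(d, c) \<in> B. I_cd n p c d)"

definition carry_frob :: "nat \<Rightarrow> (nat \<Rightarrow> nat) \<Rightarrow> nat \<Rightarrow> nat" where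
  "carry_frob e c l = (if l \<le> e then 0 else c (l - e))"

definition frob_set :: "nat \<Rightarrow> nat \<Rightarrow> (nat \<times> (nat \<Rightarrow> nat)) set \<Rightarrow> (nat \<times> (nat \<Rightarrow> nat)) set" where
  "frob_set p e B = (\<lambda>(d, c). (d * p ^ e, carry_frob e c)) ` B"

end

theory Submission
  imports Defs "HOL-Computational_Algebra.Primes"
begin

text \<open>Raising to the power q = p^e is additive in characteristic p, so the Frobenius power of
  the ideal generated by G is generated by the q-th powers of G.  Since I_B is generated by
  monomials, it remains to compare exponent sets: an exponent vector of degree d q has carry
  pattern at most c^{[q]} exactly when it is q times one of degree d with carry pattern at most c.
  Indeed, multiplying all exponents by p^e shifts every base-p expansion by e places, hence the
  carry pattern too; conversely the bound 0 on the e-th carry says that the residues of the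
  exponents modulo p^e add up to less than p^e, and since their sum is divisible by p^e they
  all vanish.\<close>

lemma polyring_mult:
  assumes "f \<in> polyring n" "g \<in> polyring n"
  shows "f * g \<in> polyring n"
  unfolding polyring_def
proof (intro CollectI ballI)
  fix b assume "b \<in> Poly_Mapping.keys (f * g)"
  then obtain a c where "b = a + c" "a \<in> Poly_Mapping.keys f" "c \<in> Poly_Mapping.keys g"
    using keys_mult by blast
  then show "Poly_Mapping.keys b \<subseteq> {..<n}"
    using assms keys_add[of a c] unfolding polyring_def by blast
qed

lemma polyring_add: "f \<in> polyring n \<Longrightarrow> g \<in> polyring n \<Longrightarrow> f + g \<in> polyring n"
  using keys_add[of f g] unfolding polyring_def by blast

lemma polyring_zero [simp]: "0 \<in> polyring n"
  unfolding polyring_def by simp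

lemma polyring_one [simp]: "1 \<in> polyring n"
  unfolding polyring_def by simp

lemma polyring_power: "f \<in> polyring n \<Longrightarrow> f ^ k \<in> polyring n"
  by (induction k) (auto intro: polyring_mult)

lemma ideal_gen_zero: "0 \<in> ideal_gen n G"
  unfolding ideal_gen_def by (rule CollectI, rule exI[of _ "{}"]) auto

lemma ideal_gen_base: "g \<in> G \<Longrightarrow> g \<in> ideal_gen n G"
  unfolding ideal_gen_def
  by (rule CollectI, rule exI[of _ "{g}"], rule exI[of _ "\<lambda>_. 1"]) auto

lemma ideal_gen_add:
  assumes "f \<in> ideal_gen n G" "f' \<in> ideal_gen n G"
  shows "f + f' \<in> ideal_gen n G"
proof -
  obtain F1 h1 where 1: "finite F1" "F1 \<subseteq> G" "\<forall>g\<in>F1. h1 g \<in> polyring n" "f = (\<Sum>g\<in>F1. h1 g * g)"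
    using assms(1) unfolding ideal_gen_def by blast
  obtain F2 h2 where 2: "finite F2" "F2 \<subseteq> G" "\<forall>g\<in>F2. h2 g \<in> polyring n" "f' = (\<Sum>g\<in>F2. h2 g * g)"
    using assms(2) unfolding ideal_gen_def by blast
  define h where "h g = (if g \<in> F1 then h1 g else 0) + (if g \<in> F2 then h2 g else 0)" for g
  have "(\<Sum>g\<in>F1 \<union> F2. h g * g)
      = (\<Sum>g\<in>F1 \<union> F2. if g \<in> F1 then h1 g * g else 0) + (\<Sum>g\<in>F1 \<union> F2. if g \<in> F2 then h2 g * g else 0)"
    unfolding sum.distrib[symmetric] by (rule sum.cong) (auto simp: h_def distrib_right)
  also have "\<dots> = f + f'"
    using 1 2 by (simp add: sum.If_cases Int_absorb1 Int_absorb2)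
  finally show ?thesis
    unfolding ideal_gen_def using 1 2
    by (intro CollectI exI[of _ "F1 \<union> F2"] exI[of _ h]) (auto simp: h_def intro!: polyring_add)
qed

lemma ideal_gen_mult:
  assumes "f \<in> ideal_gen n G" "h \<in> polyring n"
  shows "h * f \<in> ideal_gen n G"
proof -
  obtain F h' where F: "finite F" "F \<subseteq> G" "\<forall>g\<in>F. h' g \<in> polyring n" "f = (\<Sum>g\<in>F. h' g * g)"
    using assms(1) unfolding ideal_gen_def by blast
  have "h * f = (\<Sum>g\<in>F. (h * h' g) * g)"
    using F by (simp add: sum_distrib_left mult.assoc)
  then show ?thesis
    unfolding ideal_gen_def using F assms(2)
    by (intro CollectI exI[of _ F] exI[of _ "\<lambda>g. h * h' g"]) (auto intro: polyring_mult)
qed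

lemma ideal_gen_sum: "(\<And>x. x \<in> A \<Longrightarrow> f x \<in> ideal_gen n G) \<Longrightarrow> sum f A \<in> ideal_gen n G"
  by (induction A rule: infinite_finite_induct) (auto intro: ideal_gen_add ideal_gen_zero)

lemma ideal_gen_subset_ideal_gen:
  assumes "G \<subseteq> ideal_gen n H"
  shows "ideal_gen n G \<subseteq> ideal_gen n H"
proof
  fix f assume "f \<in> ideal_gen n G"
  then obtain F h where F: "finite F" "F \<subseteq> G" "\<forall>g\<in>F. h g \<in> polyring n" "f = (\<Sum>g\<in>F. h g * g)"
    unfolding ideal_gen_def by blast
  show "f \<in> ideal_gen n H"
    unfolding F(4) using F assms by (intro ideal_gen_sum ideal_gen_mult) auto
qed

lemma ideal_gen_mono: "G \<subseteq> H \<Longrightarrow> ideal_gen n G \<subseteq> ideal_gen n H"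
  by (rule ideal_gen_subset_ideal_gen) (auto intro: ideal_gen_base)

lemma ideal_gen_UN_ideal_gen:
  "ideal_gen n (\<Union>x\<in>A. ideal_gen n (G x)) = ideal_gen n (\<Union>x\<in>A. G x)"
proof
  have "ideal_gen n (G x) \<subseteq> ideal_gen n (\<Union>x\<in>A. G x)" if "x \<in> A" for x
    using that by (intro ideal_gen_mono) auto
  then show "ideal_gen n (\<Union>x\<in>A. ideal_gen n (G x)) \<subseteq> ideal_gen n (\<Union>x\<in>A. G x)"
    by (intro ideal_gen_subset_ideal_gen) blast
  show "ideal_gen n (\<Union>x\<in>A. G x) \<subseteq> ideal_gen n (\<Union>x\<in>A. ideal_gen n (G x))"
    by (intro ideal_gen_mono) (auto intro: ideal_gen_base)
qed

lemma CHAR_poly_mapping [simp]: "CHAR(('a::monoid_add \<Rightarrow>\<^sub>0 'b::semiring_1)) = CHAR('b)"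
proof (rule CHAR_eqI)
  fix x assume "of_nat x = (0 :: 'a \<Rightarrow>\<^sub>0 'b)"
  then have "Poly_Mapping.lookup (of_nat x :: 'a \<Rightarrow>\<^sub>0 'b) 0 = 0" by simp
  then show "CHAR('b) dvd x" by (simp add: lookup_of_nat of_nat_eq_0_iff_char_dvd)
qed (simp flip: single_of_nat)

lemma frob_power_ideal_gen:
  fixes G :: "'k::comm_ring_1 mpoly set"
  assumes "prime CHAR('k)"
  shows "frob_power n (ideal_gen n G) (CHAR('k) ^ e) = ideal_gen n ((\<lambda>g. g ^ CHAR('k) ^ e) ` G)"
proof
  let ?q = "CHAR('k) ^ e"
  show "frob_power n (ideal_gen n G) ?q \<subseteq> ideal_gen n ((\<lambda>g. g ^ ?q) ` G)"
    unfolding frob_power_def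
  proof (rule ideal_gen_subset_ideal_gen, clarify)
    fix f assume "f \<in> ideal_gen n G"
    then obtain F h where F: "finite F" "F \<subseteq> G" "\<forall>g\<in>F. h g \<in> polyring n" "f = (\<Sum>g\<in>F. h g * g)"
      unfolding ideal_gen_def by blast
    have "f ^ ?q = (\<Sum>g\<in>F. h g ^ ?q * g ^ ?q)"
      unfolding F(4) using assms by (simp add: freshmans_dream_sum' power_mult_distrib)
    also have "\<dots> \<in> ideal_gen n ((\<lambda>g. g ^ ?q) ` G)"
      using F by (intro ideal_gen_sum ideal_gen_mult ideal_gen_base polyring_power) auto
    finally show "f ^ ?q \<in> ideal_gen n ((\<lambda>g. g ^ ?q) ` G)" .
  qed
  show "ideal_gen n ((\<lambda>g. g ^ ?q) ` G) \<subseteq> frob_power n (ideal_gen n G) ?q"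
    unfolding frob_power_def by (rule ideal_gen_mono) (auto intro: ideal_gen_base)
qed

lemma lookup_map: "f 0 = 0 \<Longrightarrow> Poly_Mapping.lookup (Poly_Mapping.map f b) i = f (Poly_Mapping.lookup b i)"
  by transfer (simp add: when_def)

definition scale_exps :: "nat \<Rightarrow> (nat \<Rightarrow>\<^sub>0 nat) \<Rightarrow> nat \<Rightarrow>\<^sub>0 nat" where
  "scale_exps q b = Poly_Mapping.map ((*) q) b"

lemma lookup_scale_exps [simp]: "Poly_Mapping.lookup (scale_exps q b) i = q * Poly_Mapping.lookup b i"
  unfolding scale_exps_def by (simp add: lookup_map)

lemma monom_power: "(monom b :: 'k::comm_ring_1 mpoly) ^ k = monom (scale_exps k b)"
proof (induction k)
  case 0
  have "scale_exps 0 b = 0" by (rule poly_mapping_eqI) simp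
  then show ?case by (simp add: monom_def)
next
  case (Suc k)
  have "b + scale_exps k b = scale_exps (Suc k) b" by (rule poly_mapping_eqI) (simp add: lookup_add)
  then show ?case using Suc by (simp add: monom_def mult_single)
qed

lemma lookup_eq_0_if_deg_monos: "b \<in> deg_monos d n \<Longrightarrow> n \<le> i \<Longrightarrow> Poly_Mapping.lookup b i = 0"
  by (auto simp: deg_monos_def in_keys_iff)

lemma scale_exps_in_deg_monos_iff:
  assumes "q > 0"
  shows "scale_exps q b \<in> deg_monos (d * q) n \<longleftrightarrow> b \<in> deg_monos d n"
proof -
  have "Poly_Mapping.keys (scale_exps q b) = Poly_Mapping.keys b"
    using assms by (auto simp: in_keys_iff)
  moreover have "(\<Sum>i<n. Poly_Mapping.lookup (scale_exps q b) i) = (\<Sum>i<n. Poly_Mapping.lookup b i) * q"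
    by (simp add: sum_distrib_left mult.commute)
  ultimately show ?thesis
    using assms by (simp add: deg_monos_def)
qed

lemma digit_sum_eq_mod: "(\<Sum>j<l. digit p a j * p ^ j) = a mod p ^ l"
proof (induction l)
  case (Suc l)
  have "a mod p ^ Suc l = p ^ l * (a div p ^ l mod p) + a mod p ^ l"
    using mod_mult2_eq[of a "p ^ l" p] by (simp add: mult.commute)
  then show ?case using Suc by (simp add: digit_def mult.commute)
qed simp

lemma digit_mult_power_add: "p > 0 \<Longrightarrow> digit p (d * p ^ e) (j + e) = digit p d j"
  unfolding digit_def by (simp add: power_add div_mult_mult2)

lemma digit_mult_power_less:
  assumes "p > 0" "j < e"
  shows "digit p (d * p ^ e) j = 0"
proof -
  have "p ^ e = p ^ j * (p * p ^ (e - j - 1))"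
    using assms by (simp flip: power_add power_Suc)
  then have "d * p ^ e div p ^ j = p * (d * p ^ (e - j - 1))"
    using assms by simp
  then show ?thesis unfolding digit_def by simp
qed

lemma digit_eq_0_if_le:
  assumes "p > 1" "d \<le> j"
  shows "digit p d j = 0"
proof -
  have "j < p ^ j"
    using assms(1) by (simp add: power_gt_expt)
  then show ?thesis
    using assms(2) unfolding digit_def by simp
qed

lemma finite_nonzero_digits:
  assumes "p > 1"
  shows "finite {j. digit p d j \<noteq> 0}"
proof (rule finite_subset[of _ "{..<d}"])
  show "{j. digit p d j \<noteq> 0} \<subseteq> {..<d}"
  proof
    fix j assume "j \<in> {j. digit p d j \<noteq> 0}"
    then show "j \<in> {..<d}"
      using digit_eq_0_if_le[OF assms, of d j] by (cases "d \<le> j") auto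
  qed
qed simp

lemma nonzero_digits_nonempty:
  assumes "p > 1" "d > 0"
  shows "{j. digit p d j \<noteq> 0} \<noteq> {}"
proof
  assume no_digits: "{j. digit p d j \<noteq> 0} = {}"
  have "d < p ^ d"
    using assms(1) by (simp add: power_gt_expt)
  then have "d = d mod p ^ d"
    by simp
  also have "\<dots> = 0"
    using no_digits by (simp flip: digit_sum_eq_mod)
  finally show False
    using assms(2) by simp
qed

lemma topdig_0 [simp]: "topdig p 0 = 0"
  by (simp add: topdig_def)

lemma topdig_mult_power:
  assumes "p > 1" "d > 0"
  shows "topdig p (d * p ^ e) = topdig p d + e"
proof -
  have "{j. digit p (d * p ^ e) j \<noteq> 0} = (\<lambda>j. j + e) ` {j. digit p d j \<noteq> 0}"
  proof (rule set_eqI, rule iffI)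
    fix j assume "j \<in> {j. digit p (d * p ^ e) j \<noteq> 0}"
    then have "\<not> j < e" "digit p (d * p ^ e) j \<noteq> 0"
      using digit_mult_power_less[of p j e d] assms by auto
    then show "j \<in> (\<lambda>j. j + e) ` {j. digit p d j \<noteq> 0}"
      using digit_mult_power_add[of p d e "j - e"] assms by (intro image_eqI[of _ _ "j - e"]) auto
  qed (use digit_mult_power_add assms in auto)
  then show ?thesis
    using Max_add_commute[OF finite_nonzero_digits nonzero_digits_nonempty, of p d id e] assms
    by (simp add: topdig_def)
qed

lemma carry_eq:
  assumes "1 \<le> l" "l \<le> topdig p d"
  shows "carry p n d b l = ((\<Sum>i<n. Poly_Mapping.lookup b i mod p ^ l) - d mod p ^ l) div p ^ l"
  using assms unfolding carry_def by (simp add: digit_sum_eq_mod)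

lemma carry_scale_exps_shift:
  assumes "p > 1" "d > 0" "1 \<le> l" "l \<le> topdig p d"
  shows "carry p n (d * p ^ e) (scale_exps (p ^ e) b) (l + e) = carry p n d b l"
proof -
  let ?q = "p ^ e"
  have mod_shift: "(x * ?q) mod p ^ (l + e) = (x mod p ^ l) * ?q" for x
    by (simp add: power_add mult_mod_left)
  have "carry p n (d * ?q) (scale_exps ?q b) (l + e)
      = ((\<Sum>i<n. (Poly_Mapping.lookup b i mod p ^ l) * ?q) - (d mod p ^ l) * ?q) div (p ^ l * ?q)"
    using assms topdig_mult_power[OF assms(1,2)]
    by (subst carry_eq) (simp_all add: mod_shift mult.commute power_add)
  also have "\<dots> = ((\<Sum>i<n. Poly_Mapping.lookup b i mod p ^ l) - d mod p ^ l) * ?q div (p ^ l * ?q)"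
    by (simp only: sum_distrib_right diff_mult_distrib)
  also have "\<dots> = carry p n d b l"
    using assms by (simp add: carry_eq div_mult_mult2)
  finally show ?thesis .
qed

lemma carry_scale_exps_eq_0:
  assumes "p > 0" "l \<le> e"
  shows "carry p n (d * p ^ e) (scale_exps (p ^ e) b) l = 0"
proof -
  have "p ^ l dvd p ^ e"
    using assms(2) by (rule le_imp_power_dvd)
  then have mod_0: "x * p ^ e mod p ^ l = 0" for x
    by (simp add: dvd_imp_mod_0)
  show ?thesis
  proof (cases "1 \<le> l \<and> l \<le> topdig p (d * p ^ e)")
    case True
    then show ?thesis
      using mod_0 by (simp add: carry_eq mult.commute[of "p ^ e"])
  qed (auto simp: carry_def)
qed

lemma carry_le_scale_exps_iff:
  assumes "p > 1"
  shows "carry_le p (d * p ^ e) (carry p n (d * p ^ e) (scale_exps (p ^ e) b)) (carry_frob e c)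
     \<longleftrightarrow> carry_le p d (carry p n d b) c"
proof (cases "d = 0")
  case False
  then have top: "topdig p (d * p ^ e) = topdig p d + e"
    using assms by (simp add: topdig_mult_power)
  show ?thesis
    unfolding carry_le_def
  proof (intro iffI allI impI)
    fix l assume scaled: "\<forall>l. 1 \<le> l \<and> l \<le> topdig p (d * p ^ e)
        \<longrightarrow> carry p n (d * p ^ e) (scale_exps (p ^ e) b) l \<le> carry_frob e c l"
      and l: "1 \<le> l \<and> l \<le> topdig p d"
    then have "carry p n (d * p ^ e) (scale_exps (p ^ e) b) (l + e) \<le> carry_frob e c (l + e)"
      using top by simp
    then show "carry p n d b l \<le> c l"
      using carry_scale_exps_shift[of p d l n e b] assms False l by (simp add: carry_frob_def)
  next
    fix l assume unscaled: "\<forall>l. 1 \<le> l \<and> l \<le> topdig p d \<longrightarrow> carry p n d b l \<le> c l"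
      and l: "1 \<le> l \<and> l \<le> topdig p (d * p ^ e)"
    show "carry p n (d * p ^ e) (scale_exps (p ^ e) b) l \<le> carry_frob e c l"
    proof (cases "l \<le> e")
      case True
      then show ?thesis
        using assms by (simp add: carry_scale_exps_eq_0)
    next
      case False
      define l' where "l' = l - e"
      have l': "l = l' + e" "1 \<le> l'" "l' \<le> topdig p d"
        using False l top by (auto simp: l'_def)
      have "carry p n (d * p ^ e) (scale_exps (p ^ e) b) l = carry p n d b l'"
        using carry_scale_exps_shift[OF assms _ l'(2,3)] \<open>d \<noteq> 0\<close> l'(1) by simp
      also have "\<dots> \<le> c l'"
        using unscaled l'(2,3) by blast
      also have "\<dots> = carry_frob e c l"
        using l'(1,2) by (simp add: carry_frob_def)
      finally show ?thesis .
    qed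
  qed
qed (simp add: carry_le_def)

lemma mod_eq_0_if_sum_mod_less:
  fixes x :: "'a \<Rightarrow> nat"
  assumes "q dvd (\<Sum>i\<in>A. x i)" "(\<Sum>i\<in>A. x i mod q) < q" "finite A" "i \<in> A"
  shows "x i mod q = 0"
proof -
  have "(\<Sum>i\<in>A. x i mod q) mod q = 0"
    using assms(1) by (simp add: mod_sum_eq)
  then have "(\<Sum>i\<in>A. x i mod q) = 0"
    using assms(2) by simp
  then show ?thesis
    using assms(3,4) by simp
qed

lemma exps_dvd_if_carry_le_carry_frob:
  assumes "p > 1" "1 \<le> e" "b \<in> deg_monos (d * p ^ e) n"
    and "carry_le p (d * p ^ e) (carry p n (d * p ^ e) b) (carry_frob e c)"
  shows "p ^ e dvd Poly_Mapping.lookup b i"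
proof (cases "i < n")
  case True
  let ?q = "p ^ e"
  have deg: "(\<Sum>i<n. Poly_Mapping.lookup b i) = d * ?q"
    using assms(3) by (simp add: deg_monos_def)
  have small: "(\<Sum>i<n. Poly_Mapping.lookup b i mod ?q) < ?q"
  proof (cases "d = 0")
    case True
    have "(\<Sum>i<n. Poly_Mapping.lookup b i mod ?q) \<le> (\<Sum>i<n. Poly_Mapping.lookup b i)"
      by (intro sum_mono) simp
    then show ?thesis
      using True deg assms(1) by simp
  next
    case False
    then have e: "1 \<le> e" "e \<le> topdig p (d * ?q)"
      using assms(1,2) by (simp_all add: topdig_mult_power)
    then have "carry p n (d * ?q) b e \<le> carry_frob e c e"
      using assms(4) unfolding carry_le_def by blast
    then have "(\<Sum>i<n. Poly_Mapping.lookup b i mod ?q) div ?q = 0"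
      using e by (simp add: carry_eq carry_frob_def)
    then show ?thesis
      using assms(1) by (simp add: div_eq_0_iff)
  qed
  have "Poly_Mapping.lookup b i mod ?q = 0"
    by (rule mod_eq_0_if_sum_mod_less[where x = "Poly_Mapping.lookup b"]) (use small deg True in auto)
  then show ?thesis
    by (simp add: mod_eq_0_iff_dvd)
next
  case False
  then show ?thesis
    using lookup_eq_0_if_deg_monos[OF assms(3)] by simp
qed

definition carry_monos :: "nat \<Rightarrow> nat \<Rightarrow> nat \<Rightarrow> (nat \<Rightarrow> nat) \<Rightarrow> (nat \<Rightarrow>\<^sub>0 nat) set" where
  "carry_monos p n d c = {b \<in> deg_monos d n. carry_le p d (carry p n d b) c}"

lemma carry_monos_carry_frob:
  assumes "p > 1" "1 \<le> e"
  shows "carry_monos p n (d * p ^ e) (carry_frob e c) = scale_exps (p ^ e) ` carry_monos p n d c"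
proof
  have q: "p ^ e > 0"
    using assms(1) by simp
  show "scale_exps (p ^ e) ` carry_monos p n d c \<subseteq> carry_monos p n (d * p ^ e) (carry_frob e c)"
    using scale_exps_in_deg_monos_iff[OF q] carry_le_scale_exps_iff[OF assms(1)]
    by (auto simp: carry_monos_def)
  show "carry_monos p n (d * p ^ e) (carry_frob e c) \<subseteq> scale_exps (p ^ e) ` carry_monos p n d c"
  proof
    fix b' assume b': "b' \<in> carry_monos p n (d * p ^ e) (carry_frob e c)"
    have dvd: "p ^ e dvd Poly_Mapping.lookup b' i" for i
      using b' unfolding carry_monos_def by (blast intro: exps_dvd_if_carry_le_carry_frob[OF assms])
    define b where "b = Poly_Mapping.map (\<lambda>x. x div p ^ e) b'"
    have "b' = scale_exps (p ^ e) b"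
      by (rule poly_mapping_eqI) (simp add: b_def lookup_map dvd_mult_div_cancel[OF dvd])
    then show "b' \<in> scale_exps (p ^ e) ` carry_monos p n d c"
      using b' scale_exps_in_deg_monos_iff[OF q] carry_le_scale_exps_iff[OF assms(1)]
      by (auto simp: carry_monos_def)
  qed
qed

lemma I_B_eq_ideal_gen_carry_monos:
  "I_B n p B = ideal_gen n (\<Union>(d, c)\<in>B. monom ` carry_monos p n d c)"
  using ideal_gen_UN_ideal_gen[of n "\<lambda>(d, c). monom ` carry_monos p n d c" B]
  by (simp add: I_B_def I_cd_def carry_monos_def split_def)

theorem mainTheorem5:
  fixes B :: "(nat \<times> (nat \<Rightarrow> nat)) set" and n p e :: nat
  assumes "CHAR('k::alg_closed_field) = p" and "p > 0"
    and "B \<subseteq> carry_all n p" and "finite B" and "e \<ge> 1"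
  shows "frob_power n (I_B n p B :: 'k mpoly set) (p ^ e) = I_B n p (frob_set p e B)"
proof -
  have "prime p"
    using assms(1,2) prime_CHAR_semidom[where 'a = 'k] by simp
  then have "p > 1"
    by (rule prime_gt_1_nat)
  have "(\<lambda>g. g ^ p ^ e) ` monom ` carry_monos p n d c
      = (monom ` carry_monos p n (d * p ^ e) (carry_frob e c) :: 'k mpoly set)" for d c
    by (simp add: carry_monos_carry_frob[OF \<open>p > 1\<close> assms(5)] image_image monom_power)
  then have "(\<lambda>g. g ^ p ^ e) ` (\<Union>(d, c)\<in>B. monom ` carry_monos p n d c)
      = (\<Union>(d, c)\<in>frob_set p e B. monom ` carry_monos p n d c :: 'k mpoly set)"
    by (simp add: image_UN frob_set_def split_def)
  then show ?thesis
    using frob_power_ideal_gen[where 'k = 'k, of n "\<Union>(d, c)\<in>B. monom ` carry_monos p n d c" e]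
      assms(1) \<open>prime p\<close>
    by (simp add: I_B_eq_ideal_gen_carry_monos)
qed

end
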